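(* Let $D\subseteq[n]\times[n]$ be a diagram. Fix any diagram $C^{(1)}\le D$ and set $\bm{m}=\prod_{j=1}^n\prod_{i\in C^{(1)}_j}x_i$. Let $C^{(1)},\dots,C^{(r)}$ be all the diagrams $C$ with $C\le D$ and $\prod_{j=1}^n\prod_{i\in C_j}x_i=\bm{m}$. Then the coefficient of $\bm{m}$ in $\chi_D$ equals $$\dim\Big(\mathrm{Span}_{\mathbb{C}}\Big\{\prod_{j=1}^n\det\big(Y^{C^{(i)}_j}_{D_j}\big)\ :\ i\in[r]\Big\}\Big).$$
   Context: A diagram $D\subseteq[n]\times[n]$ is a set of boxes $(i,j)$ (row $i$, column $j$), identified with its column sequence $(D_1,\dots,D_n)$, $D_j=\{i:(i,j)\in D\}$. For $R,S\subseteq[n]$, $R\le S$ means $\#R=\#S$ and the $k$-th smallest element of $R$ is at most the $k$-th smallest element of $S$ for each $k$; for diagrams, $C\le D$ means $C_j\le D_j$ for all $j$. Let $Y$ be the $n\times n$ upper-triangular matrix with indeterminates $y_{ij}$ ($i\le j$) and zeros below the diagonal, and $Y^R_S$ its submatrix with rows $R$ and columns $S$ (determinant of the empty matrix is $1$). Let $B$ be the group of invertible upper-triangular complex $n\times n$ matrices acting on $\mathbb{C}[Y]$ by $(f\cdot b)(Y)=f(b^{-1}Y)$. The flagged Weyl module is $\mathcal{M}_D=\mathrm{Span}_{\mathbb{C}}\{\prod_{j=1}^n\det(Y^{C_j}_{D_j}): C\le D\}$, a $B$-module. For a $B$-module $N$, $\mathrm{char}(N)(x_1,\dots,x_n)$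 is the trace of $\mathrm{diag}(x_1,\dots,x_n)$ acting on $N$, and the dual character is $\mathrm{char}^*(N)(x_1,\dots,x_n)=\mathrm{char}(N)(x_1^{-1},\dots,x_n^{-1})$. Set $\chi_D=\mathrm{char}^*\mathcal{M}_D$. *)

theory Defs
  imports Complex_Main "HOL-Library.Poly_Mapping" "HOL-Combinatorics.Permutations"
begin

text \<open>Polynomials in the variables y_(i,j): finitely supported maps from monomials
  (exponent maps on index pairs) to complex coefficients.\<close>
type_synonym ymon = "(nat \<times> nat) \<Rightarrow>\<^sub>0 nat"
type_synonym ypoly = "ymon \<Rightarrow>\<^sub>0 complex"

definition cscale :: "complex \<Rightarrow> ypoly \<Rightarrow> ypoly" where
  "cscale c p = Poly_Mapping.map (\<lambda>v. c * v) p"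

abbreviation cspan :: "ypoly set \<Rightarrow> ypoly set" where
  "cspan \<equiv> module.span cscale"

abbreviation cdim :: "ypoly set \<Rightarrow> nat" where
  "cdim \<equiv> vector_space.dim cscale"

definition Yent :: "nat \<Rightarrow> nat \<Rightarrow> ypoly" where
  "Yent i j = (if i \<le> j then Poly_Mapping.single (Poly_Mapping.single (i, j) 1) 1 else 0)"

text \<open>det(Y^R_S): rows R, columns S (both in increasing order); the empty minor is 1.\<close>
definition minor :: "nat set \<Rightarrow> nat set \<Rightarrow> ypoly" where
  "minor R S = (if card R = card S then
     (\<Sum>p\<in>{p. p permutes {0..<card R}}. of_int (sign p) *
        (\<Prod>k<card R. Yent (sorted_list_of_set R ! k) (sorted_list_of_set S ! p k)))
   else 0)"

definition diagrams :: "nat \<Rightarrow> (nat \<times> nat) set set" where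
  "diagrams n = {D. D \<subseteq> {1..n} \<times> {1..n}}"

definition col :: "(nat \<times> nat) set \<Rightarrow> nat \<Rightarrow> nat set" where
  "col D j = {i. (i, j) \<in> D}"

definition set_le :: "nat set \<Rightarrow> nat set \<Rightarrow> bool" where
  "set_le R S \<longleftrightarrow> card R = card S \<and>
     (\<forall>k < card R. sorted_list_of_set R ! k \<le> sorted_list_of_set S ! k)"

definition diag_le :: "nat \<Rightarrow> (nat \<times> nat) set \<Rightarrow> (nat \<times> nat) set \<Rightarrow> bool" where
  "diag_le n C D \<longleftrightarrow> (\<forall>j\<in>{1..n}. set_le (col C j) (col D j))"

definition detprod :: "nat \<Rightarrow> (nat \<times> nat) set \<Rightarrow> (nat \<times> nat) set \<Rightarrow> ypoly" where
  "detprod n C D = (\<Prod>j\<in>{1..n}. minor (col C j) (col D j))"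

definition weyl_module :: "nat \<Rightarrow> (nat \<times> nat) set \<Rightarrow> ypoly set" where
  "weyl_module n D = cspan {detprod n C D | C. C \<in> diagrams n \<and> diag_le n C D}"

text \<open>Action of b = diag(x_1,...,x_n) in B: (f\<cdot>b)(Y) = f(b^{-1} Y), i.e. the substitution
  y_(i,j) \<mapsto> x_i^{-1} y_(i,j).\<close>
definition mon_weight :: "(nat \<Rightarrow> complex) \<Rightarrow> ymon \<Rightarrow> complex" where
  "mon_weight x mo = (\<Prod>ij\<in>Poly_Mapping.keys mo. inverse (x (fst ij)) ^ (Poly_Mapping.lookup mo ij))"

definition diag_act :: "(nat \<Rightarrow> complex) \<Rightarrow> ypoly \<Rightarrow> ypoly" where
  "diag_act x f = Abs_poly_mapping (\<lambda>mo. Poly_Mapping.lookup f mo * mon_weight x mo)"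

definition trace_on :: "ypoly set \<Rightarrow> (ypoly \<Rightarrow> ypoly) \<Rightarrow> complex" where
  "trace_on W T = (let B = (SOME B. B \<subseteq> W \<and> \<not> module.dependent cscale B \<and> W \<subseteq> cspan B)
     in (\<Sum>b\<in>B. module.representation cscale B (T b) b))"

definition char_mod :: "ypoly set \<Rightarrow> (nat \<Rightarrow> complex) \<Rightarrow> complex" where
  "char_mod N x = trace_on N (diag_act x)"

definition dual_char :: "ypoly set \<Rightarrow> (nat \<Rightarrow> complex) \<Rightarrow> complex" where
  "dual_char N x = char_mod N (\<lambda>i. inverse (x i))"

definition chi :: "nat \<Rightarrow> (nat \<times> nat) set \<Rightarrow> (nat \<Rightarrow> complex) \<Rightarrow> complex" where
  "chi n D = dual_char (weyl_module n D)"

text \<open>Exponent vector of the monomial \<Prod>_j \<Prod>_{i\<in>C_j} x_i.\<close>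
definition xexp :: "nat \<Rightarrow> (nat \<times> nat) set \<Rightarrow> nat \<Rightarrow> nat" where
  "xexp n C i = card {j\<in>{1..n}. i \<in> col C j}"

text \<open>c is the coefficient function of a polynomial in x_1..x_n representing f on the torus.\<close>
definition poly_coeffs :: "nat \<Rightarrow> ((nat \<Rightarrow> nat) \<Rightarrow> complex) \<Rightarrow> ((nat \<Rightarrow> complex) \<Rightarrow> complex) \<Rightarrow> bool" where
  "poly_coeffs n c f \<longleftrightarrow> finite {\<alpha>. c \<alpha> \<noteq> 0} \<and>
     (\<forall>\<alpha>. c \<alpha> \<noteq> 0 \<longrightarrow> (\<forall>i. i \<notin> {1..n} \<longrightarrow> \<alpha> i = 0)) \<and>
     (\<forall>x. (\<forall>i\<in>{1..n}. x i \<noteq> 0) \<longrightarrow>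
        f x = (\<Sum>\<alpha>\<in>{\<alpha>. c \<alpha> \<noteq> 0}. c \<alpha> * (\<Prod>i\<in>{1..n}. x i ^ \<alpha> i)))"

end

(* Grade C[Y] by row degree: the monomial with exponents m_ij has degree (sum_j m_ij)_i.
   Every term of det(Y^{C_j}_{D_j}) uses each row of C_j exactly once, so the product of minors
   of a diagram C is homogeneous of degree xexp n C, the exponent vector of the monomial m of C.
   The torus acts on a homogeneous polynomial of degree alpha by the scalar x^(-alpha), i.e. by
   x^alpha in the dual character.  Homogeneous polynomials of distinct degrees are independent,
   so bases of the spans of the generators of each degree together form an eigenbasis of M_D,
   and chi_D = sum_alpha dim(span of the generators of degree alpha) x^alpha.  Finally, the
   coefficients of a polynomial function on the torus are unique: the Kronecker substitution
   x_i = t^(M^(i-1)) turns a vanishing one into a univariate polynomial with infinitely many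
   roots. *)

theory Submission
  imports Defs "HOL-Computational_Algebra.Polynomial"
begin

lemma lookup_cscale [simp]: "Poly_Mapping.lookup (cscale c p) m = c * Poly_Mapping.lookup p m"
  unfolding cscale_def by (simp add: Poly_Mapping.map.rep_eq when_def)

interpretation cs: vector_space cscale
  by unfold_locales (auto intro!: poly_mapping_eqI simp: lookup_add algebra_simps)

section \<open>Traces\<close>

text \<open>Both sides equal the double sum of the products of the coordinates of f c in B
  and of b in B', over b in B and c in B'.\<close>

lemma (in vector_space) trace_independent_of_basis:
  assumes fin: "finite B" "finite B'" and indep: "independent B" "independent B'"
    and span_eq: "span B = span B'" and lin: "Vector_Spaces.linear scale scale f"
    and closed: "f ` span B \<subseteq> span B"
  shows "(\<Sum>b\<in>B. representation B (f b) b) = (\<Sum>c\<in>B'. representation B' (f c) c)"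
proof -
  interpret f: Vector_Spaces.linear scale scale f by (fact lin)
  have in_B: "b \<in> span B'" if "b \<in> B" for b
    using that span_eq span_base by blast
  have f_in: "f c \<in> span B" if "c \<in> B'" for c
    using that closed span_eq span_base by blast
  have expand: "representation B (f b) b =
      (\<Sum>c\<in>B'. representation B' b c * representation B (f c) b)" if "b \<in> B" for b
  proof -
    have "f b = (\<Sum>c\<in>B'. representation B' b c *s f c)"
      using sum_representation_eq[OF indep(2) in_B[OF that] fin(2) subset_refl]
      by (metis (no_types, lifting) f.scale f.sum sum.cong)
    then show ?thesis
      by (simp add: representation_sum[OF indep(1)] representation_scale[OF indep(1)] span_scale f_in)
  qed
  have contract: "(\<Sum>b\<in>B. representation B (f c) b * representation B' b c) =
      representation B' (f c) c" if "c \<in> B'" for c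
  proof -
    have "representation B' (f c) c = representation B' (\<Sum>b\<in>B. representation B (f c) b *s b) c"
      by (simp only: sum_representation_eq[OF indep(1) f_in[OF that] fin(1) subset_refl])
    also have "\<dots> = (\<Sum>b\<in>B. representation B (f c) b * representation B' b c)"
      by (simp add: representation_sum[OF indep(2)] representation_scale[OF indep(2)] span_scale in_B)
    finally show ?thesis ..
  qed
  have "(\<Sum>b\<in>B. representation B (f b) b) =
      (\<Sum>c\<in>B'. \<Sum>b\<in>B. representation B (f c) b * representation B' b c)"
    by (simp add: expand sum.swap[of _ B] mult.commute)
  also have "\<dots> = (\<Sum>c\<in>B'. representation B' (f c) c)"
    by (simp add: contract)
  finally show ?thesis .
qed

lemma (in module) span_UN_eq_span_UN:
  assumes "\<And>\<alpha>. \<alpha> \<in> A \<Longrightarrow> B \<alpha> \<subseteq> S \<alpha>"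
    and "\<And>\<alpha>. \<alpha> \<in> A \<Longrightarrow> S \<alpha> \<subseteq> span (B \<alpha>)"
  shows "span (\<Union>\<alpha>\<in>A. S \<alpha>) = span (\<Union>\<alpha>\<in>A. B \<alpha>)"
proof -
  have "S \<alpha> \<subseteq> span (\<Union>\<alpha>\<in>A. B \<alpha>)" if "\<alpha> \<in> A" for \<alpha>
    using assms(2)[OF that] span_mono[of "B \<alpha>" "\<Union>\<alpha>\<in>A. B \<alpha>"] that by blast
  then have "(\<Union>\<alpha>\<in>A. S \<alpha>) \<subseteq> span (\<Union>\<alpha>\<in>A. B \<alpha>)"
    by (rule UN_least)
  moreover have "(\<Union>\<alpha>\<in>A. B \<alpha>) \<subseteq> span (\<Union>\<alpha>\<in>A. S \<alpha>)"
    using UN_mono[OF subset_refl assms(1)] span_superset by (rule order_trans)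
  ultimately show ?thesis by (simp add: span_eq)
qed

lemma trace_on_span:
  assumes fin: "finite B" and indep: "cs.independent B"
    and lin: "Vector_Spaces.linear cscale cscale f" and closed: "f ` cs.span B \<subseteq> cs.span B"
  shows "trace_on (cs.span B) f = (\<Sum>b\<in>B. cs.representation B (f b) b)"
proof -
  define is_basis where
    "is_basis B' \<longleftrightarrow> B' \<subseteq> cs.span B \<and> cs.independent B' \<and> cs.span B \<subseteq> cs.span B'" for B'
  define B' where "B' = (SOME B'. is_basis B')"
  have "is_basis B"
    unfolding is_basis_def using indep by (simp add: cs.span_superset)
  then have "is_basis B'"
    unfolding B'_def by (rule someI)
  then have sub: "B' \<subseteq> cs.span B" and indep': "cs.independent B'"
    and span_sub: "cs.span B \<subseteq> cs.span B'"
    unfolding is_basis_def by auto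
  have fin': "finite B'"
    using cs.independent_span_bound[OF fin indep' sub] by simp
  have span_eq: "cs.span B' = cs.span B"
    using cs.span_minimal[OF sub cs.subspace_span] span_sub by (rule subset_antisym)
  have "trace_on (cs.span B) f = (\<Sum>b\<in>B'. cs.representation B' (f b) b)"
    unfolding trace_on_def is_basis_def[symmetric] B'_def[symmetric] by simp
  also have "\<dots> = (\<Sum>b\<in>B. cs.representation B (f b) b)"
    using cs.trace_independent_of_basis[OF fin' fin indep' indep span_eq lin] closed span_eq by simp
  finally show ?thesis .
qed

lemma trace_on_graded_eigenbasis:
  assumes fin: "finite A" "\<And>\<alpha>. \<alpha> \<in> A \<Longrightarrow> finite (B \<alpha>)"
    and disj: "disjoint_family_on B A" and indep: "cs.independent (\<Union>\<alpha>\<in>A. B \<alpha>)"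
    and lin: "Vector_Spaces.linear cscale cscale f"
    and eigen: "\<And>\<alpha> b. \<alpha> \<in> A \<Longrightarrow> b \<in> B \<alpha> \<Longrightarrow> f b = cscale (c \<alpha>) b"
  shows "trace_on (cs.span (\<Union>\<alpha>\<in>A. B \<alpha>)) f = (\<Sum>\<alpha>\<in>A. of_nat (card (B \<alpha>)) * c \<alpha>)"
proof -
  let ?B = "\<Union>\<alpha>\<in>A. B \<alpha>"
  interpret f: Vector_Spaces.linear cscale cscale f by (fact lin)
  have "f ` ?B \<subseteq> cs.span ?B"
  proof (rule image_subsetI)
    fix b assume "b \<in> ?B"
    then obtain \<alpha> where "\<alpha> \<in> A" "b \<in> B \<alpha>" by blast
    then show "f b \<in> cs.span ?B"
      using eigen \<open>b \<in> ?B\<close> by (simp add: cs.span_scale cs.span_base)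
  qed
  then have "f ` cs.span ?B \<subseteq> cs.span ?B"
    unfolding f.span_image[symmetric] by (rule cs.span_minimal[OF _ cs.subspace_span])
  then have "trace_on (cs.span ?B) f = (\<Sum>b\<in>?B. cs.representation ?B (f b) b)"
    using fin indep lin by (intro trace_on_span) auto
  also have "\<dots> = (\<Sum>\<alpha>\<in>A. \<Sum>b\<in>B \<alpha>. cs.representation ?B (f b) b)"
    using fin disj by (intro sum.UNION_disjoint_family) auto
  also have "\<dots> = (\<Sum>\<alpha>\<in>A. \<Sum>b\<in>B \<alpha>. c \<alpha>)"
  proof (intro sum.cong refl)
    fix \<alpha> b assume "\<alpha> \<in> A" "b \<in> B \<alpha>"
    then have "b \<in> ?B" by blast
    then show "cs.representation ?B (f b) b = c \<alpha>"
      using eigen[OF \<open>\<alpha> \<in> A\<close> \<open>b \<in> B \<alpha>\<close>] cs.representation_basis[OF indep]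
      by (simp add: cs.representation_scale[OF indep] cs.span_base)
  qed
  finally show ?thesis by simp
qed

section \<open>The row grading of the polynomial ring\<close>

definition row_degree :: "ymon \<Rightarrow> nat \<Rightarrow> nat" where
  "row_degree m i = (\<Sum>ij\<in>{ij\<in>Poly_Mapping.keys m. fst ij = i}. Poly_Mapping.lookup m ij)"

lemma row_degree_eq_sum:
  assumes "finite S" "Poly_Mapping.keys m \<subseteq> S"
  shows "row_degree m i = (\<Sum>ij\<in>{ij\<in>S. fst ij = i}. Poly_Mapping.lookup m ij)"
  unfolding row_degree_def
  by (rule sum.mono_neutral_left) (use assms in \<open>auto simp: in_keys_iff\<close>)

lemma row_degree_add: "row_degree (m + m') i = row_degree m i + row_degree m' i"
proof -
  let ?S = "Poly_Mapping.keys m \<union> Poly_Mapping.keys m'"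
  have "finite ?S" by simp
  then show ?thesis
    using row_degree_eq_sum[of ?S "m + m'"] row_degree_eq_sum[of ?S m] row_degree_eq_sum[of ?S m']
    by (simp add: keys_add lookup_add sum.distrib)
qed

lemma row_degree_zero [simp]: "row_degree 0 = (\<lambda>i. 0)"
  by (simp add: row_degree_def fun_eq_iff)

lemma row_degree_single:
  "row_degree (Poly_Mapping.single (i, j) k) = (\<lambda>i'. if i' = i then k else 0)"
proof -
  have "{ij\<in>Poly_Mapping.keys (Poly_Mapping.single (i, j) k). fst ij = i'} =
      (if i' = i \<and> k \<noteq> 0 then {(i, j)} else {})" for i'
    by auto
  then show ?thesis by (simp add: row_degree_def fun_eq_iff)
qed

definition homogeneous :: "(ymon \<Rightarrow> 'a) \<Rightarrow> 'a \<Rightarrow> ypoly \<Rightarrow> bool" where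
  "homogeneous w \<alpha> p \<longleftrightarrow> (\<forall>m\<in>Poly_Mapping.keys p. w m = \<alpha>)"

lemma homogeneous_zero: "homogeneous w \<alpha> 0"
  by (simp add: homogeneous_def)

lemma homogeneous_add: "homogeneous w \<alpha> p \<Longrightarrow> homogeneous w \<alpha> q \<Longrightarrow> homogeneous w \<alpha> (p + q)"
  using keys_add[of p q] unfolding homogeneous_def by blast

lemma homogeneous_sum:
  "(\<And>x. x \<in> A \<Longrightarrow> homogeneous w \<alpha> (f x)) \<Longrightarrow> homogeneous w \<alpha> (sum f A)"
  by (induction A rule: infinite_finite_induct) (auto simp: homogeneous_zero homogeneous_add)

lemma homogeneous_degree_unique:
  "homogeneous w \<alpha> p \<Longrightarrow> homogeneous w \<beta> p \<Longrightarrow> p \<noteq> 0 \<Longrightarrow> \<alpha> = \<beta>"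
  unfolding homogeneous_def by (metis all_not_in_conv keys_eq_empty)

lemma independent_UN_homogeneous:
  assumes fin: "finite A" "\<And>\<alpha>. \<alpha> \<in> A \<Longrightarrow> finite (B \<alpha>)"
    and indep: "\<And>\<alpha>. \<alpha> \<in> A \<Longrightarrow> cs.independent (B \<alpha>)"
    and hom: "\<And>\<alpha> b. \<alpha> \<in> A \<Longrightarrow> b \<in> B \<alpha> \<Longrightarrow> homogeneous w \<alpha> b"
  shows "cs.independent (\<Union>\<alpha>\<in>A. B \<alpha>)"
proof (rule cs.independent_if_scalars_zero)
  let ?B = "\<Union>\<alpha>\<in>A. B \<alpha>"
  show fin_B: "finite ?B" using fin by blast
  fix g v assume sum0: "(\<Sum>u\<in>?B. cscale (g u) u) = 0" and "v \<in> ?B"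
  then obtain \<beta> where \<beta>: "\<beta> \<in> A" "v \<in> B \<beta>" by blast
  \<comment> \<open>Restricting the vanishing combination to the monomials of degree \<open>\<beta>\<close> leaves
     exactly the part supported on \<open>B \<beta>\<close>.\<close>
  have "(\<Sum>u\<in>B \<beta>. cscale (g u) u) = 0"
  proof (rule poly_mapping_eqI)
    fix m
    show "Poly_Mapping.lookup (\<Sum>u\<in>B \<beta>. cscale (g u) u) m = Poly_Mapping.lookup 0 m"
    proof (cases "w m = \<beta>")
      case True
      have "Poly_Mapping.lookup (\<Sum>u\<in>B \<beta>. cscale (g u) u) m =
          Poly_Mapping.lookup (\<Sum>u\<in>?B. cscale (g u) u) m"
        unfolding lookup_sum lookup_cscale
        by (rule sum.mono_neutral_left[OF fin_B])
           (use \<beta> True hom in \<open>auto simp: homogeneous_def in_keys_iff\<close>)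
      then show ?thesis using sum0 by simp
    next
      case False
      then show ?thesis
        using hom[OF \<beta>(1)] by (auto simp: lookup_sum homogeneous_def in_keys_iff intro!: sum.neutral)
    qed
  qed
  then show "g v = 0"
    using cs.independentD[OF indep[OF \<beta>(1)] fin(2)[OF \<beta>(1)] subset_refl _ \<beta>(2)] by blast
qed

lemma disjoint_family_on_homogeneous:
  assumes "\<And>\<alpha>. \<alpha> \<in> A \<Longrightarrow> cs.independent (B \<alpha>)"
    and "\<And>\<alpha> b. \<alpha> \<in> A \<Longrightarrow> b \<in> B \<alpha> \<Longrightarrow> homogeneous w \<alpha> b"
  shows "disjoint_family_on B A"
proof -
  have "b \<noteq> 0" if "\<alpha> \<in> A" "b \<in> B \<alpha>" for \<alpha> b
    using assms(1)[OF that(1)] that(2) cs.dependent_zero by blast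
  then show ?thesis
    unfolding disjoint_family_on_def using assms(2) homogeneous_degree_unique by (metis disjoint_iff)
qed

lemma homogeneous_of_int: "homogeneous row_degree (\<lambda>i. 0) (of_int k)"
  unfolding homogeneous_def by (auto simp: in_keys_iff lookup_of_int when_def split: if_splits)

lemma homogeneous_mult:
  "homogeneous row_degree \<alpha> p \<Longrightarrow> homogeneous row_degree \<beta> q \<Longrightarrow>
    homogeneous row_degree (\<lambda>i. \<alpha> i + \<beta> i) (p * q)"
  using keys_mult[of p q] unfolding homogeneous_def by (fastforce simp: row_degree_add)

lemma homogeneous_prod:
  "finite A \<Longrightarrow> (\<And>x. x \<in> A \<Longrightarrow> homogeneous row_degree (\<alpha> x) (f x)) \<Longrightarrow>
    homogeneous row_degree (\<lambda>i. \<Sum>x\<in>A. \<alpha> x i) (prod f A)"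
proof (induction A rule: finite_induct)
  case empty
  then show ?case using homogeneous_of_int[of 1] by simp
next
  case (insert a A)
  then show ?case using homogeneous_mult[of "\<alpha> a" "f a" "\<lambda>i. \<Sum>x\<in>A. \<alpha> x i"] by simp
qed

lemma homogeneous_Yent: "homogeneous row_degree (\<lambda>i'. if i' = i then 1 else 0) (Yent i j)"
  by (simp add: Yent_def homogeneous_def homogeneous_zero row_degree_single fun_eq_iff)

lemma sum_nth_sorted_list_of_set:
  assumes "finite R"
  shows "(\<Sum>k<card R. g (sorted_list_of_set R ! k)) = (\<Sum>r\<in>R. g r)"
proof -
  let ?r = "sorted_list_of_set R"
  have "(\<Sum>r\<in>R. g r) = sum_list (map g ?r)"
    using assms sum.distinct_set_conv_list[of ?r g] by simp
  also have "\<dots> = (\<Sum>k<card R. g (?r ! k))"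
    using assms by (simp add: sum_list_sum_nth atLeast0LessThan)
  finally show ?thesis ..
qed

lemma homogeneous_minor:
  assumes "finite R"
  shows "homogeneous row_degree (\<lambda>i. if i \<in> R then 1 else 0) (minor R S)"
proof (cases "card R = card S")
  case True
  let ?r = "sorted_list_of_set R" and ?s = "sorted_list_of_set S"
  have "(\<lambda>i. 0 + (\<Sum>k<card R. if i = ?r ! k then 1 else 0)) = (\<lambda>i. if i \<in> R then 1 else (0::nat))"
    using assms by (simp add: sum_nth_sorted_list_of_set[where g = "\<lambda>r. if _ = r then 1 else 0"])
  moreover have "homogeneous row_degree (\<lambda>i. 0 + (\<Sum>k<card R. if i = ?r ! k then 1 else 0))
      (of_int (sign p) * (\<Prod>k<card R. Yent (?r ! k) (?s ! p k)))" for p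
    by (intro homogeneous_mult homogeneous_of_int homogeneous_prod homogeneous_Yent) simp
  ultimately show ?thesis
    using True unfolding minor_def by (auto intro!: homogeneous_sum)
next
  case False
  then show ?thesis by (simp add: minor_def homogeneous_zero)
qed

lemma finite_col: "C \<in> diagrams n \<Longrightarrow> finite (col C j)"
  unfolding diagrams_def col_def by (rule finite_subset[of _ "{1..n}"]) auto

lemma homogeneous_detprod:
  assumes "C \<in> diagrams n"
  shows "homogeneous row_degree (xexp n C) (detprod n C D)"
proof -
  have "(\<lambda>i. \<Sum>j\<in>{1..n}. if i \<in> col C j then 1 else 0) = xexp n C"
    by (auto simp: xexp_def fun_eq_iff sum.If_cases intro!: arg_cong[where f = card])
  moreover have "homogeneous row_degree (\<lambda>i. \<Sum>j\<in>{1..n}. if i \<in> col C j then 1 else 0) (detprod n C D)"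
    unfolding detprod_def by (intro homogeneous_prod homogeneous_minor finite_col[OF assms]) simp
  ultimately show ?thesis by simp
qed

section \<open>The torus action and the character\<close>

lemma lookup_diag_act:
  "Poly_Mapping.lookup (diag_act y p) m = Poly_Mapping.lookup p m * mon_weight y m"
proof -
  have "finite {m. Poly_Mapping.lookup p m * mon_weight y m \<noteq> 0}"
    by (rule finite_subset[OF _ finite_lookup[of p]]) auto
  then show ?thesis unfolding diag_act_def by simp
qed

lemma linear_diag_act: "Vector_Spaces.linear cscale cscale (diag_act y)"
  unfolding Vector_Spaces.linear_iff
  by (auto intro!: poly_mapping_eqI cs.vector_space_axioms simp: lookup_diag_act lookup_add algebra_simps)

lemma mon_weight_inverse:
  assumes "finite S" "\<And>i. i \<notin> S \<Longrightarrow> row_degree m i = 0"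
  shows "mon_weight (\<lambda>i. inverse (x i)) m = (\<Prod>i\<in>S. x i ^ row_degree m i)"
proof -
  let ?K = "Poly_Mapping.keys m"
  let ?T = "fst ` ?K \<union> S"
  have "mon_weight (\<lambda>i. inverse (x i)) m = (\<Prod>ij\<in>?K. x (fst ij) ^ Poly_Mapping.lookup m ij)"
    by (simp add: mon_weight_def)
  also have "\<dots> = (\<Prod>i\<in>?T. \<Prod>ij\<in>{ij\<in>?K. fst ij = i}. x (fst ij) ^ Poly_Mapping.lookup m ij)"
    by (rule prod.group[symmetric]) (use assms(1) in auto)
  also have "\<dots> = (\<Prod>i\<in>?T. x i ^ row_degree m i)"
    by (simp add: row_degree_def power_sum)
  also have "\<dots> = (\<Prod>i\<in>S. x i ^ row_degree m i)"
    by (rule prod.mono_neutral_right) (use assms in auto)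
  finally show ?thesis .
qed

lemma diag_act_homogeneous:
  assumes "homogeneous row_degree \<alpha> p" "\<And>i. i \<notin> {1..n} \<Longrightarrow> \<alpha> i = 0"
  shows "diag_act (\<lambda>i. inverse (x i)) p = cscale (\<Prod>i\<in>{1..n}. x i ^ \<alpha> i) p"
proof (rule poly_mapping_eqI)
  fix m
  show "Poly_Mapping.lookup (diag_act (\<lambda>i. inverse (x i)) p) m =
      Poly_Mapping.lookup (cscale (\<Prod>i\<in>{1..n}. x i ^ \<alpha> i) p) m"
  proof (cases "m \<in> Poly_Mapping.keys p")
    case True
    then have "row_degree m = \<alpha>" using assms(1) by (simp add: homogeneous_def)
    then show ?thesis
      using mon_weight_inverse[of "{1..n}" m x] assms(2) by (simp add: lookup_diag_act)
  next
    case False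
    then show ?thesis by (simp add: lookup_diag_act in_keys_iff)
  qed
qed

definition detprods_of_degree :: "nat \<Rightarrow> (nat \<times> nat) set \<Rightarrow> (nat \<Rightarrow> nat) \<Rightarrow> ypoly set" where
  "detprods_of_degree n D \<alpha> =
    {detprod n C D | C. C \<in> diagrams n \<and> diag_le n C D \<and> xexp n C = \<alpha>}"

lemma finite_diagrams: "finite (diagrams n)"
  unfolding diagrams_def by simp

lemma finite_detprods_of_degree: "finite (detprods_of_degree n D \<alpha>)"
proof -
  have "detprods_of_degree n D \<alpha> \<subseteq> (\<lambda>C. detprod n C D) ` diagrams n"
    unfolding detprods_of_degree_def by auto
  then show ?thesis using finite_diagrams finite_subset by blast
qed

lemma xexp_eq_0: "C \<in> diagrams n \<Longrightarrow> i \<notin> {1..n} \<Longrightarrow> xexp n C i = 0"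
  unfolding xexp_def diagrams_def col_def by auto

lemma chi_eq_sum_over_degrees:
  "chi n D x = (\<Sum>\<alpha>\<in>xexp n ` {C \<in> diagrams n. diag_le n C D}.
     of_nat (cdim (cspan (detprods_of_degree n D \<alpha>))) * (\<Prod>i\<in>{1..n}. x i ^ \<alpha> i))"
proof -
  let ?A = "xexp n ` {C \<in> diagrams n. diag_le n C D}"
  let ?S = "detprods_of_degree n D"
  have "\<forall>\<alpha>. \<exists>B. B \<subseteq> ?S \<alpha> \<and> cs.independent B \<and> ?S \<alpha> \<subseteq> cs.span B \<and>
      card B = cdim (?S \<alpha>)"
    by (meson cs.basis_exists)
  then obtain B where B_sub: "\<And>\<alpha>. B \<alpha> \<subseteq> ?S \<alpha>"
    and indep: "\<And>\<alpha>. cs.independent (B \<alpha>)" and spans: "\<And>\<alpha>. ?S \<alpha> \<subseteq> cs.span (B \<alpha>)" and card: "\<And>\<alpha>. card (B \<alpha>) = cdim (?S \<alpha>)"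
    by metis
  have fin_A: "finite ?A" using finite_diagrams by simp
  have fin_B: "finite (B \<alpha>)" for \<alpha>
    using B_sub finite_detprods_of_degree finite_subset by blast
  have hom: "homogeneous row_degree \<alpha> b" if "b \<in> B \<alpha>" for \<alpha> b
    using B_sub[of \<alpha>] that homogeneous_detprod unfolding detprods_of_degree_def by blast
  have "weyl_module n D = cs.span (\<Union>\<alpha>\<in>?A. ?S \<alpha>)"
    unfolding weyl_module_def detprods_of_degree_def by (rule arg_cong[where f = cs.span]) auto
  also have "\<dots> = cs.span (\<Union>\<alpha>\<in>?A. B \<alpha>)"
    by (intro cs.span_UN_eq_span_UN B_sub spans)
  finally have weyl: "weyl_module n D = cs.span (\<Union>\<alpha>\<in>?A. B \<alpha>)" .
  have "chi n D x = trace_on (cs.span (\<Union>\<alpha>\<in>?A. B \<alpha>)) (diag_act (\<lambda>i. inverse (x i)))"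
    unfolding chi_def dual_char_def char_mod_def weyl ..
  also have "\<dots> = (\<Sum>\<alpha>\<in>?A. of_nat (card (B \<alpha>)) * (\<Prod>i\<in>{1..n}. x i ^ \<alpha> i))"
  proof (rule trace_on_graded_eigenbasis)
    show "cs.independent (\<Union>\<alpha>\<in>?A. B \<alpha>)"
      using fin_A fin_B indep hom by (rule independent_UN_homogeneous)
    show "disjoint_family_on B ?A"
      using indep hom by (rule disjoint_family_on_homogeneous)
    show "diag_act (\<lambda>i. inverse (x i)) b = cscale (\<Prod>i\<in>{1..n}. x i ^ \<alpha> i) b"
      if "\<alpha> \<in> ?A" "b \<in> B \<alpha>" for \<alpha> b
    proof -
      from \<open>\<alpha> \<in> ?A\<close> obtain C where "C \<in> diagrams n" "\<alpha> = xexp n C" by blast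
      then show ?thesis
        using diag_act_homogeneous[OF hom[OF \<open>b \<in> B \<alpha>\<close>]] xexp_eq_0 by blast
    qed
  qed (use fin_A fin_B linear_diag_act in auto)
  finally show ?thesis by (simp add: card)
qed

lemma poly_coeffs_chi:
  "poly_coeffs n (\<lambda>\<alpha>. of_nat (cdim (cspan (detprods_of_degree n D \<alpha>)))) (chi n D)"
proof -
  let ?A = "xexp n ` {C \<in> diagrams n. diag_le n C D}"
  let ?c = "\<lambda>\<alpha>. of_nat (cdim (cspan (detprods_of_degree n D \<alpha>))) :: complex"
  have supp: "{\<alpha>. ?c \<alpha> \<noteq> 0} \<subseteq> ?A"
  proof
    fix \<alpha> assume "\<alpha> \<in> {\<alpha>. ?c \<alpha> \<noteq> 0}"
    then have "detprods_of_degree n D \<alpha> \<noteq> {}"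
      by (auto simp: cs.dim_eq_card_independent[OF cs.independent_empty])
    then show "\<alpha> \<in> ?A" unfolding detprods_of_degree_def by auto
  qed
  have fin_A: "finite ?A" using finite_diagrams by simp
  have "chi n D x = (\<Sum>\<alpha>\<in>{\<alpha>. ?c \<alpha> \<noteq> 0}. ?c \<alpha> * (\<Prod>i\<in>{1..n}. x i ^ \<alpha> i))" for x
    unfolding chi_eq_sum_over_degrees by (rule sum.mono_neutral_right[OF fin_A supp]) auto
  moreover have "\<alpha> i = 0" if "\<alpha> \<in> {\<alpha>. ?c \<alpha> \<noteq> 0}" "i \<notin> {1..n}" for \<alpha> i
    using subsetD[OF supp that(1)] that(2) xexp_eq_0 by auto
  ultimately show ?thesis
    unfolding poly_coeffs_def using finite_subset[OF supp fin_A] by blast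
qed

section \<open>Uniqueness of coefficients on the torus\<close>

lemma base_expansion_unique:
  fixes a b :: "nat \<Rightarrow> nat"
  assumes "\<And>i. i < n \<Longrightarrow> a i < M" "\<And>i. i < n \<Longrightarrow> b i < M"
    and "(\<Sum>i<n. a i * M ^ i) = (\<Sum>i<n. b i * M ^ i)" and "i < n"
  shows "a i = b i"
  using assms
proof (induction n arbitrary: a b i)
  case 0
  then show ?case by simp
next
  case (Suc n)
  let ?a = "\<Sum>i<n. a (Suc i) * M ^ i" and ?b = "\<Sum>i<n. b (Suc i) * M ^ i"
  have split: "(\<Sum>i<Suc n. f i * M ^ i) = f 0 + M * (\<Sum>i<n. f (Suc i) * M ^ i)" for f :: "nat \<Rightarrow> nat"
    unfolding sum.lessThan_Suc_shift by (simp add: sum_distrib_left mult_ac del: sum.lessThan_Suc)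
  have "a 0 < M" "b 0 < M" using Suc.prems by auto
  moreover have eq: "a 0 + M * ?a = b 0 + M * ?b" using Suc.prems(3) split by simp
  ultimately have "a 0 = b 0"
    by (metis mod_less mod_mult_self2)
  with eq \<open>a 0 < M\<close> have "?a = ?b" by simp
  then have "a (Suc j) = b (Suc j)" if "j < n" for j
    using Suc.IH[of "\<lambda>i. a (Suc i)" "\<lambda>i. b (Suc i)" j] Suc.prems(1,2) that by simp
  with \<open>a 0 = b 0\<close> show ?case
    using Suc.prems(4) by (cases i) auto
qed

lemma torus_monomial_sum_eq_0_imp_coeff_eq_0:
  fixes c :: "(nat \<Rightarrow> nat) \<Rightarrow> complex"
  assumes fin: "finite E" and supp: "\<And>\<alpha> i. \<alpha> \<in> E \<Longrightarrow> i \<notin> {1..n} \<Longrightarrow> \<alpha> i = 0"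
    and vanish: "\<And>x. \<forall>i\<in>{1..n}. x i \<noteq> 0 \<Longrightarrow>
      (\<Sum>\<alpha>\<in>E. c \<alpha> * (\<Prod>i\<in>{1..n}. x i ^ \<alpha> i)) = 0"
    and "\<beta> \<in> E"
  shows "c \<beta> = 0"
proof -
  define M where "M = Suc (Max (insert 0 ((\<lambda>(\<alpha>, i). \<alpha> i) ` (E \<times> {1..n}))))"
  have M: "\<alpha> i < M" if "\<alpha> \<in> E" "i \<in> {1..n}" for \<alpha> i
  proof -
    have "\<alpha> i \<in> (\<lambda>(\<alpha>, i). \<alpha> i) ` (E \<times> {1..n})" using that by force
    then have "\<alpha> i \<le> Max (insert 0 ((\<lambda>(\<alpha>, i). \<alpha> i) ` (E \<times> {1..n})))"
      using fin by (intro Max_ge) auto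
    then show ?thesis unfolding M_def by simp
  qed
  \<comment> \<open>Kronecker substitution: \<open>x i = t ^ M ^ (i - 1)\<close> turns \<open>x ^ \<alpha>\<close> into \<open>t ^ e \<alpha>\<close>,
     and \<open>e\<close> is injective on \<open>E\<close> because \<open>M\<close> bounds all exponents.\<close>
  define e where "e \<alpha> = (\<Sum>i\<in>{1..n}. \<alpha> i * M ^ (i - 1))" for \<alpha> :: "nat \<Rightarrow> nat"
  have e_shift: "e \<alpha> = (\<Sum>i<n. \<alpha> (Suc i) * M ^ i)" for \<alpha>
    unfolding e_def image_Suc_lessThan[symmetric] by (subst sum.reindex) auto
  have e_inj: "\<alpha> = \<beta>'" if "\<alpha> \<in> E" "\<beta>' \<in> E" "e \<alpha> = e \<beta>'" for \<alpha> \<beta>'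
  proof
    fix i
    show "\<alpha> i = \<beta>' i"
    proof (cases "i \<in> {1..n}")
      case True
      then obtain j where "i = Suc j" "j < n" by (cases i) auto
      then show ?thesis
        using base_expansion_unique[of n "\<lambda>i. \<alpha> (Suc i)" M "\<lambda>i. \<beta>' (Suc i)" j] that M e_shift
        by auto
    next
      case False
      then show ?thesis using supp[OF that(1) False] supp[OF that(2) False] by simp
    qed
  qed
  define p where "p = (\<Sum>\<alpha>\<in>E. monom (c \<alpha>) (e \<alpha>))"
  have "poly p t = 0" if "t \<noteq> 0" for t
  proof -
    have "(\<Prod>i\<in>{1..n}. (t ^ M ^ (i - 1)) ^ \<alpha> i) = t ^ e \<alpha>" for \<alpha>
      unfolding e_def by (simp add: power_sum power_mult[symmetric] mult.commute)
    then show ?thesis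
      using vanish[of "\<lambda>i. t ^ M ^ (i - 1)"] that by (simp add: p_def poly_sum poly_monom)
  qed
  then have "poly (pCons 0 p) t = 0" for t
    by (cases "t = 0") simp_all
  then have "p = 0"
    using poly_all_0_iff_0[of "pCons 0 p"] by simp
  have "coeff p (e \<beta>) = (\<Sum>\<alpha>\<in>E. if \<alpha> = \<beta> then c \<alpha> else 0)"
    unfolding p_def coeff_sum coeff_monom
    by (rule sum.cong[OF refl]) (use e_inj \<open>\<beta> \<in> E\<close> in auto)
  with \<open>p = 0\<close> \<open>\<beta> \<in> E\<close> fin show ?thesis by simp
qed

lemma poly_coeffs_unique:
  assumes "poly_coeffs n c f" and "poly_coeffs n c' f"
  shows "c = c'"
proof
  fix \<beta>
  let ?E = "{\<alpha>. c \<alpha> \<noteq> 0} \<union> {\<alpha>. c' \<alpha> \<noteq> 0}"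
  have fin: "finite ?E" using assms unfolding poly_coeffs_def by blast
  have expand: "f x = (\<Sum>\<alpha>\<in>?E. d \<alpha> * (\<Prod>i\<in>{1..n}. x i ^ \<alpha> i))"
    if "poly_coeffs n d f" "{\<alpha>. d \<alpha> \<noteq> 0} \<subseteq> ?E" "\<forall>i\<in>{1..n}. x i \<noteq> 0" for d x
    using that unfolding poly_coeffs_def by (auto intro: sum.mono_neutral_left[OF fin])
  have "(\<Sum>\<alpha>\<in>?E. (c \<alpha> - c' \<alpha>) * (\<Prod>i\<in>{1..n}. x i ^ \<alpha> i)) = 0"
    if "\<forall>i\<in>{1..n}. x i \<noteq> 0" for x
    using expand[OF assms(1) _ that] expand[OF assms(2) _ that]
    by (simp add: left_diff_distrib sum_subtractf)
  moreover have "\<alpha> i = 0" if "\<alpha> \<in> ?E" "i \<notin> {1..n}" for \<alpha> i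
    using assms that unfolding poly_coeffs_def by blast
  ultimately have "c \<beta> - c' \<beta> = 0" if "\<beta> \<in> ?E"
    using torus_monomial_sum_eq_0_imp_coeff_eq_0[OF fin, of n "\<lambda>\<alpha>. c \<alpha> - c' \<alpha>"] that by blast
  then show "c \<beta> = c' \<beta>" by fastforce
qed

theorem corollary5p5:
  fixes n :: nat and D C1 :: "(nat \<times> nat) set"
  assumes "D \<in> diagrams n" and "C1 \<in> diagrams n" and "diag_le n C1 D"
  shows "(\<exists>c. poly_coeffs n c (chi n D)) \<and>
    (\<forall>c. poly_coeffs n c (chi n D) \<longrightarrow>
       c (xexp n C1) = of_nat (cdim (cspan
          {detprod n C D | C. C \<in> diagrams n \<and> diag_le n C D \<and> xexp n C = xexp n C1})))"
  using poly_coeffs_chi[of n D] poly_coeffs_unique[OF _ poly_coeffs_chi[of n D]]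
  unfolding detprods_of_degree_def by blast

end
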